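(* For every even integer $n\ge 2$, the number $A_0(n)$ of cyclically alternating permutations of $[n]$ satisfies $$A_0(n)=\left(\frac{2}{\pi}\right)^{n} n!\,S(n),\qquad\text{where } S(n)=\sum_{k=-\infty}^{\infty}\frac{1}{(4k+1)^n}.$$
   Context: $[n]=\{1,2,\ldots,n\}$. For $n$ even, a permutation $\sigma$ of $[n]$ is cyclically alternating if $\sigma(i)<\sigma(i+1)$ for odd $i$, $\sigma(i)>\sigma(i+1)$ for even $i$ ($1\le i\le n-1$), and $\sigma(n)>\sigma(1)$. *)

theory Defs
  imports "HOL-Analysis.Analysis" "HOL-Combinatorics.Permutations"
begin

definition cyclically_alternating :: "nat \<Rightarrow> (nat \<Rightarrow> nat) \<Rightarrow> bool" where
  "cyclically_alternating n \<sigma> \<longleftrightarrow>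
     (\<forall>i\<in>{1..n-1}. (odd i \<longrightarrow> \<sigma> i < \<sigma> (i+1)) \<and> (even i \<longrightarrow> \<sigma> i > \<sigma> (i+1)))
     \<and> \<sigma> n > \<sigma> 1"

definition A0 :: "nat \<Rightarrow> nat" where
  "A0 n = card {\<sigma>. \<sigma> permutes {1..n} \<and> cyclically_alternating n \<sigma>}"

end

theory Submission
  imports Defs "HOL-Complex_Analysis.Complex_Analysis" "HOL-Combinatorics.Multiset_Permutations"
begin

text \<open>
  Let E(m) be the Euler zigzag number, the number of arrangements x0 < x1 > x2 < ... of m
  distinct numbers. The largest entry n of a cyclically alternating permutation of {1..n} sits
  at one of the n/2 peaks, and rotating it to the last place is a bijection onto the zigzag
  arrangements of {1..n-1} followed by n; hence 2 A0(n) = n E(n-1). Splitting a zigzag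
  arrangement at its maximum gives E(m+1) = sum over odd k of (m choose k) E(k) E(m-k) for even
  m > 0, which is the recurrence that tan' = 1 + tan^2 imposes on the derivatives of tan at 0;
  so E(m) = tan^(m)(0) for odd m. Differentiating psi(1/2 + w) - psi(1/2 - w) = pi tan(pi w),
  a consequence of the digamma reflection formula, m times at w = 0 gives
  2 psi^(m)(1/2) = pi^(m+1) E(m), and the series for psi^(m) gives
  psi^(m)(1/2) = m! 2^(m+1) sum_(j>=0) (2j+1)^-(m+1). For even n = m + 1 this last sum is the
  sum of (4k+1)^-n over all integers k.
\<close>

section \<open>Digamma reflection and tangent numbers\<close>

lemma Digamma_reflection_complex:
  fixes z :: complex
  assumes "z \<notin> \<int>"
  shows "Digamma (1 - z) - Digamma z = of_real pi * cot (of_real pi * z)"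
proof -
  have poles: "z \<notin> \<int>\<^sub>\<le>\<^sub>0" "1 - z \<notin> \<int>\<^sub>\<le>\<^sub>0"
    using assms nonpos_Ints_subset_Ints Ints_diff[of 1 "1 - z"] by auto
  have sin: "sin (of_real pi * z) \<noteq> 0"
    using assms by (subst sin_eq_0) auto
  have "((\<lambda>z. Gamma z * Gamma (1 - z)) has_field_derivative
          Gamma z * Gamma (1 - z) * (Digamma z - Digamma (1 - z))) (at z)"
    using poles by (auto intro!: derivative_eq_intros simp: algebra_simps)
  moreover have "((\<lambda>z. Gamma z * Gamma (1 - z)) has_field_derivative
          - of_real pi * (of_real pi * cos (of_real pi * z)) / (sin (of_real pi * z))\<^sup>2) (at z)"
    unfolding Gamma_reflection_complex using sin
    by (auto intro!: derivative_eq_intros simp: power2_eq_square)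
  ultimately have "Gamma z * Gamma (1 - z) * (Digamma z - Digamma (1 - z)) =
      - of_real pi * (of_real pi * cos (of_real pi * z)) / (sin (of_real pi * z))\<^sup>2"
    by (rule DERIV_unique)
  then have "of_real pi / sin (of_real pi * z) * (Digamma z - Digamma (1 - z)) =
      of_real pi / sin (of_real pi * z) * (- of_real pi * cot (of_real pi * z))"
    unfolding Gamma_reflection_complex cot_def by (simp add: power2_eq_square)
  with sin have "Digamma z - Digamma (1 - z) = - of_real pi * cot (of_real pi * z)"
    by (subst (asm) mult_left_cancel) auto
  then show ?thesis
    by (simp add: algebra_simps)
qed

lemma Digamma_half_plus_minus_eq_tan:
  fixes w :: complex
  assumes "1/2 + w \<notin> \<int>"
  shows "Digamma (1/2 + w) - Digamma (1/2 - w) = of_real pi * tan (of_real pi * w)"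
proof -
  have "1/2 - w \<notin> \<int>"
    using assms Ints_diff[of 1 "1/2 - w"] by auto
  from Digamma_reflection_complex[OF this] show ?thesis
    by (simp add: cot_def tan_def right_diff_distrib cos_diff sin_diff)
qed

lemma cos_nonzero_norm_less_pi_half:
  fixes z :: complex
  assumes "norm z < pi/2"
  shows "cos z \<noteq> 0"
proof
  assume "cos z = 0"
  then obtain k :: int where "z = of_real ((of_int k + 1/2) * pi)"
    by (auto simp: cos_eq_0 algebra_simps)
  then have "norm z = \<bar>of_int k + 1/2\<bar> * pi"
    by (simp only: norm_of_real abs_mult) simp
  moreover have "1/2 \<le> \<bar>(of_int k::real) + 1/2\<bar>"
    by (cases "k \<ge> 0") auto
  ultimately show False
    using assms mult_right_mono[of "1/2" "\<bar>of_int k + 1/2\<bar>" pi] by simp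
qed

lemma deriv_tan_complex:
  fixes z :: complex
  assumes "cos z \<noteq> 0"
  shows "deriv tan z = 1 + tan z ^ 2"
proof -
  have "deriv tan z = inverse (cos z ^ 2)"
    using DERIV_tan[OF assms] by (rule DERIV_imp_deriv)
  with assms sin_cos_squared_add[of z] show ?thesis
    by (simp add: tan_def field_simps power2_eq_square)
qed

definition tangent_number :: "nat \<Rightarrow> complex" where
  "tangent_number n = (deriv ^^ n) tan 0"

lemma tangent_number_Suc:
  "tangent_number (Suc n) = (if n = 0 then 1 else 0) +
     (\<Sum>i\<le>n. of_nat (n choose i) * tangent_number i * tangent_number (n - i))"
proof -
  let ?B = "ball (0::complex) (pi/2)"
  have tan_holo: "tan holomorphic_on ?B"
    by (rule holomorphic_on_tan) (simp add: cos_nonzero_norm_less_pi_half)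
  have "tangent_number (Suc n) = (deriv ^^ n) (deriv tan) 0"
    by (simp add: tangent_number_def funpow_Suc_right del: funpow.simps)
  also have "\<dots> = (deriv ^^ n) (\<lambda>w. 1 + tan w * tan w) 0"
  proof (rule higher_deriv_cong_ev)
    have "\<forall>\<^sub>F w in nhds 0. w \<in> ?B"
      by (rule eventually_nhds_ball) simp
    then show "\<forall>\<^sub>F w::complex in nhds 0. deriv tan w = 1 + tan w * tan w"
    proof eventually_elim
      case (elim w)
      then have "cos w \<noteq> 0"
        by (intro cos_nonzero_norm_less_pi_half) simp
      then show ?case
        by (simp add: deriv_tan_complex power2_eq_square)
    qed
  qed (rule refl)
  also have "\<dots> = (deriv ^^ n) (\<lambda>w. 1) 0 + (deriv ^^ n) (\<lambda>w. tan w * tan w) 0"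
    by (rule higher_deriv_add) (auto intro!: holomorphic_intros tan_holo)
  also have "(deriv ^^ n) (\<lambda>w. tan w * tan w) 0 =
      (\<Sum>i = 0..n. of_nat (n choose i) * tangent_number i * tangent_number (n - i))"
    unfolding tangent_number_def by (rule higher_deriv_mult[OF tan_holo tan_holo]) auto
  finally show ?thesis
    by (simp add: atLeast0AtMost)
qed

lemma higher_deriv_Polygamma_affine:
  fixes u c :: complex
  assumes "c \<notin> \<int>\<^sub>\<le>\<^sub>0"
  shows "(deriv ^^ n) (\<lambda>w. Polygamma m (c + u * w)) 0 = u ^ n * Polygamma (m + n) c"
proof -
  let ?T = "- \<int>\<^sub>\<le>\<^sub>0 :: complex set"
  have "Polygamma m holomorphic_on ?T"
    by (rule holomorphic_on_Polygamma) auto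
  moreover have "open ((\<lambda>w. u * w + c) -` ?T)" "open ?T"
    by (auto intro!: open_vimage continuous_intros)
  ultimately have "(deriv ^^ n) (\<lambda>w. Polygamma m (u * w + c)) 0 =
                   u ^ n * (deriv ^^ n) (Polygamma m) (u * 0 + c)"
    by (rule higher_deriv_compose_linear') (use assms in auto)
  then show ?thesis
    using higher_deriv_Polygamma[OF assms] by (simp add: add.commute)
qed

lemma Polygamma_half_tangent_number:
  "(1 - (-1) ^ n) * Polygamma n (1/2 :: complex) = of_real pi ^ Suc n * tangent_number n"
proof -
  let ?B = "ball (0::complex) (1/2)"
  have not_Int: "1/2 + w \<notin> \<int>" if "w \<in> ?B" for w
  proof
    assume "1/2 + w \<in> \<int>"
    then obtain k :: int where "1/2 + w = of_int k"
      by (auto elim: Ints_cases)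
    then have "Re w = of_int k - 1/2"
      by (simp add: complex_eq_iff)
    moreover have "\<bar>Re w\<bar> < 1/2"
      using that abs_Re_le_cmod[of w] by simp
    ultimately have "0 < k" "k < 1"
      by linarith+
    then show False by simp
  qed
  have half: "(1/2 :: complex) \<notin> \<int>\<^sub>\<le>\<^sub>0"
    using not_Int[of 0] nonpos_Ints_subset_Ints by auto
  have "(1 - (-1) ^ n) * Polygamma n (1/2 :: complex) =
        (deriv ^^ n) (\<lambda>w. Digamma (1/2 + w)) 0 - (deriv ^^ n) (\<lambda>w. Digamma (1/2 - w)) 0"
    using higher_deriv_Polygamma_affine[OF half, of n 0 1]
      higher_deriv_Polygamma_affine[OF half, of n 0 "-1"]
    by (simp add: algebra_simps)
  also have "\<dots> = (deriv ^^ n) (\<lambda>w. Digamma (1/2 + w) - Digamma (1/2 - w)) 0"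
    using half by (intro higher_deriv_diff_at [symmetric]) (auto intro!: analytic_intros)
  also have "\<dots> = (deriv ^^ n) (\<lambda>w. of_real pi * tan (of_real pi * w)) 0"
  proof (rule higher_deriv_cong_ev)
    have "\<forall>\<^sub>F w in nhds 0. w \<in> ?B"
      by (rule eventually_nhds_ball) simp
    then show "\<forall>\<^sub>F w::complex in nhds 0.
                 Digamma (1/2 + w) - Digamma (1/2 - w) = of_real pi * tan (of_real pi * w)"
      by eventually_elim (rule Digamma_half_plus_minus_eq_tan[OF not_Int])
  qed (rule refl)
  also have "\<dots> = of_real pi ^ Suc n * tangent_number n"
  proof -
    have "(\<lambda>w::complex. tan (of_real pi * w)) analytic_on {0}"
      by (auto intro!: analytic_intros)
    have "(deriv ^^ n) (\<lambda>w::complex. tan (of_real pi * w)) 0 =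
          of_real pi ^ n * (deriv ^^ n) tan (of_real pi * 0)"
      by (rule higher_deriv_compose_linear[of _ "ball 0 (pi/2)" "ball 0 (1/2)"])
         (auto intro!: holomorphic_on_tan cos_nonzero_norm_less_pi_half simp: norm_mult)
    with higher_deriv_cmult'[OF \<open>_ analytic_on {0}\<close>, of n "of_real pi"] show ?thesis
      by (simp add: tangent_number_def)
  qed
  finally show ?thesis .
qed

section \<open>Zigzag arrangements and Euler zigzag numbers\<close>

definition zigzag :: "'a::linorder list \<Rightarrow> bool" where
  "zigzag xs \<longleftrightarrow>
     (\<forall>i. Suc i < length xs \<longrightarrow> (if even i then xs ! i < xs ! Suc i else xs ! Suc i < xs ! i))"

definition zigzag_arrangements :: "'a::linorder set \<Rightarrow> 'a list set" where
  "zigzag_arrangements S = {xs. distinct xs \<and> set xs = S \<and> zigzag xs}"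

definition euler_zigzag :: "nat \<Rightarrow> nat" where
  "euler_zigzag n = card (zigzag_arrangements {..<n})"

lemma zigzag_take: "zigzag xs \<Longrightarrow> zigzag (take k xs)"
  unfolding zigzag_def by auto

lemma zigzag_drop:
  assumes "zigzag xs" "even k"
  shows "zigzag (drop k xs)"
  unfolding zigzag_def
proof (intro allI impI)
  fix i
  assume "Suc i < length (drop k xs)"
  moreover have "even (k + i) \<longleftrightarrow> even i"
    using \<open>even k\<close> by simp
  ultimately show "if even i then drop k xs ! i < drop k xs ! Suc i
                   else drop k xs ! Suc i < drop k xs ! i"
    using assms(1) unfolding zigzag_def by (auto simp: add.commute[of k])
qed

lemma zigzag_append_greatest:
  assumes "odd (length ys)" "\<forall>y\<in>set ys. y < M" "\<forall>z\<in>set zs. z < M" "zigzag ys" "zigzag zs"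
  shows "zigzag (ys @ M # zs)"
  unfolding zigzag_def
proof (intro allI impI)
  fix i
  let ?xs = "ys @ M # zs" and ?l = "length ys"
  assume i: "Suc i < length ?xs"
  consider (in_ys) "Suc i < ?l" | (before) "Suc i = ?l" | (at) "i = ?l" | (in_zs) "?l < i"
    by linarith
  then show "if even i then ?xs ! i < ?xs ! Suc i else ?xs ! Suc i < ?xs ! i"
  proof cases
    case in_ys
    then show ?thesis using \<open>zigzag ys\<close> by (auto simp: zigzag_def nth_append)
  next
    case before
    then have "even i" "ys ! i \<in> set ys"
      using \<open>odd ?l\<close> by (metis even_Suc, auto)
    then show ?thesis using before assms(2) by (auto simp: nth_append)
  next
    case at
    then have "odd i" "zs ! 0 \<in> set zs"
      using \<open>odd ?l\<close> i by auto
    then show ?thesis using at assms(3) by (auto simp: nth_append)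
  next
    case in_zs
    then obtain j where j: "i = Suc (?l + j)"
      using less_imp_Suc_add by blast
    then have "even i \<longleftrightarrow> even j" "Suc j < length zs"
      using \<open>odd ?l\<close> i by auto
    then show ?thesis using j \<open>zigzag zs\<close> by (auto simp: zigzag_def nth_append)
  qed
qed

lemma zigzag_greatest_index_odd:
  assumes "zigzag xs" "2 \<le> length xs" "p < length xs" "\<forall>x\<in>set xs. x \<le> xs ! p"
  shows "odd p"
proof
  assume "even p"
  show False
  proof (cases "Suc p < length xs")
    case True
    then have "xs ! p < xs ! Suc p" "xs ! Suc p \<in> set xs"
      using \<open>even p\<close> assms(1) by (auto simp: zigzag_def)
    then show False using assms(4) by fastforce
  next
    case False
    then obtain q where q: "p = Suc q"
      using assms(2,3) by (cases p) auto
    then have "xs ! p < xs ! q" "xs ! q \<in> set xs"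
      using \<open>even p\<close> assms(1,3) by (auto simp: zigzag_def)
    then show False using assms(4) by fastforce
  qed
qed

lemma finite_zigzag_arrangements: "finite S \<Longrightarrow> finite (zigzag_arrangements S)"
  by (rule finite_subset[OF _ finite_subset_distinct[of S]]) (auto simp: zigzag_arrangements_def)

lemma zigzag_map_strict_mono_iff:
  assumes "strict_mono_on (set xs) f"
  shows "zigzag (map f xs) \<longleftrightarrow> zigzag xs"
  using strict_mono_on_less[OF assms] by (auto simp: zigzag_def)

lemma zigzag_arrangements_image:
  assumes "strict_mono_on S f"
  shows "zigzag_arrangements (f ` S) = map f ` zigzag_arrangements S"
proof
  have inj: "inj_on f S"
    using assms by (rule strict_mono_on_imp_inj_on)
  show "map f ` zigzag_arrangements S \<subseteq> zigzag_arrangements (f ` S)"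
    using assms inj by (auto simp: zigzag_arrangements_def distinct_map zigzag_map_strict_mono_iff
        intro: inj_on_subset)
  show "zigzag_arrangements (f ` S) \<subseteq> map f ` zigzag_arrangements S"
  proof
    fix ys
    assume ys: "ys \<in> zigzag_arrangements (f ` S)"
    define xs where "xs = map (the_inv_into S f) ys"
    have "map f xs = ys"
      using ys inj by (auto simp: xs_def zigzag_arrangements_def f_the_inv_into_f intro!: map_idI)
    moreover have "set xs = S"
      using ys inj by (auto simp: xs_def zigzag_arrangements_def the_inv_into_f_f image_image)
    moreover have "distinct xs"
      using ys inj_on_the_inv_into[OF inj]
      by (auto simp: xs_def zigzag_arrangements_def distinct_map)
    ultimately have "xs \<in> zigzag_arrangements S"
      using ys assms zigzag_map_strict_mono_iff[of xs f] by (auto simp: zigzag_arrangements_def)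
    with \<open>map f xs = ys\<close> show "ys \<in> map f ` zigzag_arrangements S"
      by blast
  qed
qed

lemma card_zigzag_arrangements:
  fixes S :: "'a::linorder set"
  assumes "finite S"
  shows "card (zigzag_arrangements S) = euler_zigzag (card S)"
proof -
  define f where "f = (!) (sorted_list_of_set S)"
  have mono: "strict_mono_on {..<card S} f"
    using strict_sorted_list_of_set[of S]
    by (auto simp: f_def strict_mono_on_def sorted_wrt_nth_less)
  have "f ` {..<card S} = set (sorted_list_of_set S)"
    by (auto simp: f_def in_set_conv_nth)
  then have S: "f ` {..<card S} = S"
    using assms by simp
  have "inj_on (map f) (zigzag_arrangements {..<card S})"
    using strict_mono_on_imp_inj_on[OF mono]
    by (intro inj_on_mapI) (auto simp: zigzag_arrangements_def)
  then show ?thesis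
    using zigzag_arrangements_image[OF mono] card_image
    by (fastforce simp: S euler_zigzag_def)
qed

lemma zigzag_arrangement_split_greatest:
  fixes S :: "'a::linorder set"
  assumes S: "finite S" "S \<noteq> {}" "even (card S)" and M: "\<forall>x\<in>S. x < M"
    and xs: "xs \<in> zigzag_arrangements (insert M S)"
  obtains ys zs where "set ys \<subseteq> S" "odd (card (set ys))" "ys \<in> zigzag_arrangements (set ys)"
    "zs \<in> zigzag_arrangements (S - set ys)" "xs = ys @ M # zs"
proof -
  from xs have xs: "distinct xs" "set xs = insert M S" "zigzag xs"
    by (auto simp: zigzag_arrangements_def)
  have "M \<notin> S"
    using M by blast
  then have "length xs = Suc (card S)"
    using xs S distinct_card[of xs] by simp
  moreover have "card S \<noteq> 0"
    using S by simp
  ultimately have len: "2 \<le> length xs"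
    using \<open>even (card S)\<close> by presburger
  obtain p where p: "p < length xs" "xs ! p = M"
    using xs(2) by (metis in_set_conv_nth insertI1)
  have "odd p"
    using zigzag_greatest_index_odd[OF xs(3) len p(1)] xs(2) p(2) M by fastforce
  define ys zs where "ys = take p xs" and "zs = drop (Suc p) xs"
  have xs_eq: "xs = ys @ M # zs"
    using id_take_nth_drop[OF p(1)] unfolding ys_def zs_def p(2) .
  have parts: "M \<notin> set ys" "M \<notin> set zs" "set ys \<inter> set zs = {}" "distinct ys" "distinct zs"
    using xs(1) unfolding xs_eq by auto
  moreover have "insert M (set ys \<union> set zs) = insert M S"
    using xs(2) unfolding xs_eq set_append list.set(2) by blast
  ultimately have "set ys \<union> set zs = S"
    using \<open>M \<notin> S\<close> insert_ident[of M "set ys \<union> set zs" S] by blast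
  with parts(3) have sets: "set ys \<subseteq> S" "set zs = S - set ys"
    by auto
  have "odd (card (set ys))"
    using p(1) \<open>odd p\<close> distinct_card[OF parts(4)] by (simp add: ys_def)
  moreover have "zigzag ys" "zigzag zs"
    using zigzag_take[OF xs(3)] zigzag_drop[OF xs(3), of "Suc p"] \<open>odd p\<close>
    by (simp_all add: ys_def zs_def)
  ultimately show ?thesis
    using that sets parts(4,5) xs_eq by (simp add: zigzag_arrangements_def)
qed

lemma zigzag_arrangements_insert_greatest:
  fixes S :: "'a::linorder set"
  assumes S: "finite S" "S \<noteq> {}" "even (card S)" and M: "\<forall>x\<in>S. x < M"
  shows "zigzag_arrangements (insert M S) = (\<lambda>(ys, zs). ys @ M # zs) `
           (\<Union>A\<in>{A. A \<subseteq> S \<and> odd (card A)}. zigzag_arrangements A \<times> zigzag_arrangements (S - A))"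
  (is "_ = ?glue ` ?W")
proof
  show "?glue ` ?W \<subseteq> zigzag_arrangements (insert M S)"
  proof clarify
    fix A ys zs
    assume A: "A \<subseteq> S" "odd (card A)"
      and ys: "ys \<in> zigzag_arrangements A" and zs: "zs \<in> zigzag_arrangements (S - A)"
    then have "odd (length ys)"
      by (auto simp: zigzag_arrangements_def distinct_card)
    with A ys zs M show "ys @ M # zs \<in> zigzag_arrangements (insert M S)"
      by (auto simp: zigzag_arrangements_def intro!: zigzag_append_greatest)
  qed
  show "zigzag_arrangements (insert M S) \<subseteq> ?glue ` ?W"
  proof
    fix xs
    assume "xs \<in> zigzag_arrangements (insert M S)"
    then obtain ys zs where "set ys \<subseteq> S" "odd (card (set ys))" "ys \<in> zigzag_arrangements (set ys)"
      "zs \<in> zigzag_arrangements (S - set ys)" and xs: "xs = ys @ M # zs"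
      by (rule zigzag_arrangement_split_greatest[OF S M])
    then have "(ys, zs) \<in> ?W"
      by blast
    then show "xs \<in> ?glue ` ?W"
      by (rule rev_image_eqI) (simp add: xs)
  qed
qed

lemma card_zigzag_arrangements_insert_greatest:
  fixes S :: "'a::linorder set"
  assumes S: "finite S" "S \<noteq> {}" "even (card S)" and M: "\<forall>x\<in>S. x < M"
  shows "card (zigzag_arrangements (insert M S)) =
           (\<Sum>A | A \<subseteq> S \<and> odd (card A). euler_zigzag (card A) * euler_zigzag (card S - card A))"
proof -
  let ?I = "{A. A \<subseteq> S \<and> odd (card A)}"
  let ?W = "\<Union>A\<in>?I. zigzag_arrangements A \<times> zigzag_arrangements (S - A)"
  have "inj_on (\<lambda>(ys, zs). ys @ M # zs) ?W"
  proof (rule inj_onI)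
    fix a b
    assume "a \<in> ?W" "(\<lambda>(ys, zs). ys @ M # zs) a = (\<lambda>(ys, zs). ys @ M # zs) b"
    moreover obtain ys zs ys' zs' where "a = (ys, zs)" "b = (ys', zs')"
      by fastforce
    moreover have "M \<notin> set ys" "M \<notin> set zs"
      using \<open>a \<in> ?W\<close> M by (auto simp: \<open>a = (ys, zs)\<close> zigzag_arrangements_def)
    ultimately show "a = b"
      by (simp add: append_Cons_eq_iff)
  qed
  then have "card (zigzag_arrangements (insert M S)) = card ?W"
    unfolding zigzag_arrangements_insert_greatest[OF S M] by (rule card_image)
  also have "\<dots> = (\<Sum>A\<in>?I. card (zigzag_arrangements A \<times> zigzag_arrangements (S - A)))"
  proof (rule card_UN_disjoint)
    show "finite ?I"
      by (rule finite_subset[of _ "Pow S"]) (auto simp: \<open>finite S\<close>)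
    show "\<forall>A\<in>?I. finite (zigzag_arrangements A \<times> zigzag_arrangements (S - A))"
      using \<open>finite S\<close> by (auto intro!: finite_zigzag_arrangements intro: finite_subset)
    show "\<forall>A\<in>?I. \<forall>B\<in>?I. A \<noteq> B \<longrightarrow>
            (zigzag_arrangements A \<times> zigzag_arrangements (S - A)) \<inter>
            (zigzag_arrangements B \<times> zigzag_arrangements (S - B)) = {}"
      unfolding zigzag_arrangements_def by blast
  qed
  also have "\<dots> = (\<Sum>A\<in>?I. euler_zigzag (card A) * euler_zigzag (card S - card A))"
  proof (rule sum.cong[OF refl])
    fix A
    assume "A \<in> ?I"
    then have "A \<subseteq> S" "finite A"
      using \<open>finite S\<close> finite_subset by auto
    then show "card (zigzag_arrangements A \<times> zigzag_arrangements (S - A)) =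
               euler_zigzag (card A) * euler_zigzag (card S - card A)"
      using \<open>finite S\<close>
      by (simp add: card_cartesian_product card_zigzag_arrangements card_Diff_subset)
  qed
  finally show ?thesis .
qed

lemma sum_Pow_card:
  fixes g :: "nat \<Rightarrow> 'b::comm_semiring_1"
  assumes "finite S"
  shows "(\<Sum>A\<in>Pow S. g (card A)) = (\<Sum>k\<le>card S. of_nat (card S choose k) * g k)"
proof -
  have "(\<Sum>A\<in>Pow S. g (card A)) = (\<Sum>k\<le>card S. \<Sum>A | A \<in> Pow S \<and> card A = k. g (card A))"
    using assms by (intro sum.group[symmetric]) (auto simp: card_mono)
  also have "\<dots> = (\<Sum>k\<le>card S. of_nat (card S choose k) * g k)"
    using n_subsets[OF assms] by (simp add: Pow_def)
  finally show ?thesis .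
qed

lemma euler_zigzag_Suc:
  assumes "even m" "m \<noteq> 0"
  shows "euler_zigzag (Suc m) =
           (\<Sum>k\<le>m. if odd k then (m choose k) * (euler_zigzag k * euler_zigzag (m - k)) else 0)"
proof -
  let ?g = "\<lambda>k. if odd k then euler_zigzag k * euler_zigzag (m - k) else 0"
  have "euler_zigzag (Suc m) = card (zigzag_arrangements (insert m {..<m}))"
    by (simp add: euler_zigzag_def lessThan_Suc)
  also have "\<dots> = (\<Sum>A | A \<subseteq> {..<m} \<and> odd (card A).
                      euler_zigzag (card A) * euler_zigzag (m - card A))"
    using assms by (subst card_zigzag_arrangements_insert_greatest) auto
  also have "\<dots> = (\<Sum>A\<in>Pow {..<m}. ?g (card A))"
    by (subst sum.inter_filter[symmetric]) (auto intro!: sum.cong)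
  also have "\<dots> = (\<Sum>k\<le>m. (m choose k) * ?g k)"
    by (subst sum_Pow_card) auto
  finally show ?thesis
    by (simp add: if_distrib cong: if_cong)
qed

lemma euler_zigzag_1: "euler_zigzag 1 = 1"
proof -
  have "xs = [0]" if "distinct xs" "set xs = {0::nat}" for xs
    using that by (cases xs) (auto simp: subset_singleton_iff)
  then have "zigzag_arrangements {..<1} = {[0::nat]}"
    by (auto simp: zigzag_arrangements_def zigzag_def)
  then show ?thesis
    by (simp add: euler_zigzag_def)
qed

lemma tangent_number_eq_euler_zigzag:
  "tangent_number n = (if odd n then of_nat (euler_zigzag n) else 0)"
proof (induction n rule: less_induct)
  case (less n)
  consider "n = 0" | "n = 1" | m where "n = Suc m" "m \<noteq> 0"
    by (metis One_nat_def not0_implies_Suc)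
  then show ?case
  proof cases
    case 1
    then show ?thesis by (simp add: tangent_number_def)
  next
    case 2
    have "tangent_number 1 = 1"
      using tangent_number_Suc[of 0] by (simp add: tangent_number_def)
    then show ?thesis
      using 2 euler_zigzag_1 by simp
  next
    case 3
    have IH: "tangent_number k = (if odd k then of_nat (euler_zigzag k) else 0)" if "k \<le> m" for k
      using less.IH 3 that by simp
    have "tangent_number n =
          (\<Sum>k\<le>m. of_nat (m choose k) * tangent_number k * tangent_number (m - k))"
      using tangent_number_Suc[of m] 3 by simp
    also have "\<dots> = of_nat (\<Sum>k\<le>m. if odd k \<and> odd (m - k)
                            then (m choose k) * (euler_zigzag k * euler_zigzag (m - k)) else 0)"
      unfolding of_nat_sum by (intro sum.cong refl) (simp add: IH)
    also have "(\<Sum>k\<le>m. if odd k \<and> odd (m - k)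
                 then (m choose k) * (euler_zigzag k * euler_zigzag (m - k)) else 0) =
               (if odd n then euler_zigzag n else 0)"
    proof (cases "even m")
      case True
      then have "(\<Sum>k\<le>m. if odd k \<and> odd (m - k)
                   then (m choose k) * (euler_zigzag k * euler_zigzag (m - k)) else 0) =
                 (\<Sum>k\<le>m. if odd k
                   then (m choose k) * (euler_zigzag k * euler_zigzag (m - k)) else 0)"
        by (intro sum.cong refl) auto
      with True 3 show ?thesis
        by (simp add: euler_zigzag_Suc)
    next
      case False
      then have "\<not> (odd k \<and> odd (m - k))" if "k \<le> m" for k
        using that by auto
      with False 3 show ?thesis
        by simp
    qed
    finally show ?thesis
      by simp
  qed
qed

section \<open>Cyclically alternating permutations\<close>

definition cyclic_zigzag :: "'a::linorder list \<Rightarrow> bool" where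
  "cyclic_zigzag xs \<longleftrightarrow>
     (\<forall>i<length xs. if even i then xs ! i < xs ! (Suc i mod length xs)
                     else xs ! (Suc i mod length xs) < xs ! i)"

lemma cyclic_zigzag_iff:
  assumes "even (length xs)" "xs \<noteq> []"
  shows "cyclic_zigzag xs \<longleftrightarrow> zigzag xs \<and> xs ! 0 < xs ! (length xs - 1)"
proof -
  obtain m where m: "length xs = Suc m" "odd m"
    using assms by (cases "length xs") auto
  have "cyclic_zigzag xs \<longleftrightarrow>
          (\<forall>i<m. if even i then xs ! i < xs ! Suc i else xs ! Suc i < xs ! i) \<and> xs ! 0 < xs ! m"
    unfolding cyclic_zigzag_def m(1) All_less_Suc using m(2) by (auto simp: conj_commute)
  moreover have "zigzag xs \<longleftrightarrow> (\<forall>i<m. if even i then xs ! i < xs ! Suc i else xs ! Suc i < xs ! i)"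
    by (simp add: zigzag_def m(1))
  ultimately show ?thesis
    by (simp add: m(1))
qed

lemma cyclic_zigzag_rotate:
  assumes "even (length xs)" "even k" "cyclic_zigzag xs"
  shows "cyclic_zigzag (rotate k xs)"
  unfolding cyclic_zigzag_def length_rotate
proof (intro allI impI)
  let ?n = "length xs"
  fix i
  assume i: "i < ?n"
  then have n: "0 < ?n"
    by linarith
  define j where "j = (k + i) mod ?n"
  have "j < ?n"
    using n by (simp add: j_def)
  have "even j \<longleftrightarrow> even (k + i)"
    unfolding j_def using assms(1) by (rule dvd_mod_iff)
  with assms(2) have "even j \<longleftrightarrow> even i"
    by simp
  have "rotate k xs ! i = xs ! j"
    using i by (simp add: nth_rotate j_def)
  moreover have "rotate k xs ! (Suc i mod ?n) = xs ! ((k + Suc i mod ?n) mod ?n)"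
    using n by (simp add: nth_rotate)
  moreover have "(k + Suc i mod ?n) mod ?n = Suc j mod ?n"
    unfolding j_def by (simp add: mod_add_right_eq mod_Suc_eq)
  moreover have "if even j then xs ! j < xs ! (Suc j mod ?n) else xs ! (Suc j mod ?n) < xs ! j"
    using assms(3) \<open>j < ?n\<close> unfolding cyclic_zigzag_def by blast
  ultimately show "if even i then rotate k xs ! i < rotate k xs ! (Suc i mod ?n)
                   else rotate k xs ! (Suc i mod ?n) < rotate k xs ! i"
    using \<open>even j \<longleftrightarrow> even i\<close> by simp
qed

definition cyclic_zigzag_arrangements :: "'a::linorder set \<Rightarrow> 'a list set" where
  "cyclic_zigzag_arrangements S = {xs. distinct xs \<and> set xs = S \<and> cyclic_zigzag xs}"

lemma bij_betw_permutes_distinct_lists: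
  assumes "distinct xs"
  shows "bij_betw (\<lambda>\<sigma>. map \<sigma> xs) {\<sigma>. \<sigma> permutes set xs} {ys. distinct ys \<and> set ys = set xs}"
proof -
  let ?f = "\<lambda>\<sigma>. map \<sigma> xs" and ?A = "{\<sigma>. \<sigma> permutes set xs}"
    and ?B = "{ys. distinct ys \<and> set ys = set xs}"
  have inj: "inj_on ?f ?A"
  proof (rule inj_onI)
    fix \<sigma> \<tau>
    assume "\<sigma> \<in> ?A" "\<tau> \<in> ?A" "map \<sigma> xs = map \<tau> xs"
    then have "\<sigma> x = \<tau> x" for x
      by (cases "x \<in> set xs") (auto simp: map_eq_conv permutes_not_in)
    then show "\<sigma> = \<tau>" ..
  qed
  have sub: "?f ` ?A \<subseteq> ?B"
    using assms by (auto simp: distinct_map permutes_inj_on permutes_image)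
  have "card (?f ` ?A) = card ?B"
    using card_image[OF inj] card_permutations[OF refl finite_set]
      card_permutations_of_set[of "set xs"]
    by (simp add: permutations_of_set_def conj_commute)
  with sub have "?f ` ?A = ?B"
    using finite_permutations_of_set[of "set xs"]
    by (intro card_subset_eq) (auto simp: permutations_of_set_def conj_commute)
  with inj show ?thesis
    by (simp add: bij_betw_def)
qed

lemma cyclically_alternating_iff_cyclic_zigzag:
  assumes "even n" "n \<noteq> 0"
  shows "cyclically_alternating n \<sigma> \<longleftrightarrow> cyclic_zigzag (map \<sigma> [1..<Suc n])"
proof -
  let ?xs = "map \<sigma> [1..<Suc n]"
  have nth: "?xs ! i = \<sigma> (Suc i)" if "i < n" for i
    using that by (simp add: nth_upt del: upt_Suc)
  have shift: "(\<forall>i\<in>{1..n-1}. P i) \<longleftrightarrow> (\<forall>i. Suc i < n \<longrightarrow> P (Suc i))" for P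
  proof
    assume "\<forall>i\<in>{1..n-1}. P i"
    then show "\<forall>i. Suc i < n \<longrightarrow> P (Suc i)"
      by auto
  next
    assume suc: "\<forall>i. Suc i < n \<longrightarrow> P (Suc i)"
    show "\<forall>i\<in>{1..n-1}. P i"
    proof
      fix i
      assume "i \<in> {1..n-1}"
      then obtain j where "i = Suc j" "Suc j < n"
        by (cases i) auto
      with suc show "P i"
        by simp
    qed
  qed
  have "zigzag ?xs \<longleftrightarrow>
          (\<forall>i\<in>{1..n-1}. (odd i \<longrightarrow> \<sigma> i < \<sigma> (i+1)) \<and> (even i \<longrightarrow> \<sigma> i > \<sigma> (i+1)))"
    unfolding shift by (auto simp: zigzag_def nth simp del: upt_Suc)
  moreover have "?xs ! 0 = \<sigma> 1" "?xs ! (n - 1) = \<sigma> n"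
    using assms by (simp_all add: nth del: upt_Suc)
  ultimately show ?thesis
    using assms by (simp add: cyclic_zigzag_iff cyclically_alternating_def del: upt_Suc)
qed

lemma bij_betw_restrict_pred:
  assumes "bij_betw f A B"
  shows "bij_betw f {x \<in> A. P (f x)} {y \<in> B. P y}"
  using assms unfolding bij_betw_def by (auto intro: inj_on_subset)

lemma A0_eq_card_cyclic_zigzag_arrangements:
  assumes "even n" "n \<noteq> 0"
  shows "A0 n = card (cyclic_zigzag_arrangements {1..n})"
proof -
  let ?f = "\<lambda>\<sigma>. map \<sigma> [1..<Suc n]"
  have "bij_betw ?f {\<sigma>. \<sigma> permutes {1..n}} {xs. distinct xs \<and> set xs = {1..n}}"
    using bij_betw_permutes_distinct_lists[of "[1..<Suc n]"]
    by (simp add: atLeastLessThanSuc_atLeastAtMost del: upt_Suc)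
  then have "bij_betw ?f {\<sigma> \<in> {\<sigma>. \<sigma> permutes {1..n}}. cyclic_zigzag (?f \<sigma>)}
                       {xs \<in> {xs. distinct xs \<and> set xs = {1..n}}. cyclic_zigzag xs}"
    by (rule bij_betw_restrict_pred)
  then have "bij_betw ?f {\<sigma>. \<sigma> permutes {1..n} \<and> cyclically_alternating n \<sigma>}
                       (cyclic_zigzag_arrangements {1..n})"
    by (simp add: cyclically_alternating_iff_cyclic_zigzag[OF assms] cyclic_zigzag_arrangements_def
        del: upt_Suc)
  then show ?thesis
    unfolding A0_def by (rule bij_betw_same_card)
qed

lemma length_cyclic_zigzag_arrangement:
  "xs \<in> cyclic_zigzag_arrangements {1..n} \<Longrightarrow> length xs = n"
  using distinct_card[of xs] by (auto simp: cyclic_zigzag_arrangements_def)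

lemma cyclic_zigzag_arrangement_greatest_odd:
  assumes "even n" "n \<noteq> 0" "xs \<in> cyclic_zigzag_arrangements {1..n}"
  obtains p where "p < n" "odd p" "xs ! p = n"
proof -
  have xs: "set xs = {1..n}" "cyclic_zigzag xs" and len: "length xs = n"
    using assms(3) length_cyclic_zigzag_arrangement by (auto simp: cyclic_zigzag_arrangements_def)
  obtain p where p: "p < n" "xs ! p = n"
    using xs(1) assms(2) len by (metis atLeastAtMost_iff in_set_conv_nth le_refl less_one not_le)
  have "zigzag xs"
    using xs(2) assms(1,2) len cyclic_zigzag_iff[of xs] by fastforce
  moreover have "2 \<le> length xs"
    using assms(1,2) len by presburger
  ultimately have "odd p"
    using zigzag_greatest_index_odd[of xs p] p len xs(1) by auto
  with p that show ?thesis
    by blast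
qed

lemma card_cyclic_zigzag_arrangements_greatest_at:
  assumes "even n" "odd p" "p < n"
  shows "card {xs \<in> cyclic_zigzag_arrangements {1..n}. xs ! p = n} =
         card {xs \<in> cyclic_zigzag_arrangements {1..n}. xs ! (n - 1) = n}"
proof -
  let ?C = "cyclic_zigzag_arrangements {1..n}"
  have rotate_in: "rotate k xs \<in> ?C" if "xs \<in> ?C" "even k" for xs k
    using that assms(1) cyclic_zigzag_rotate length_cyclic_zigzag_arrangement[OF that(1)]
    by (auto simp: cyclic_zigzag_arrangements_def)
  have nth_rotate': "rotate k xs ! i = xs ! ((k + i) mod n)" if "xs \<in> ?C" "i < n" for xs k i
    using that nth_rotate length_cyclic_zigzag_arrangement by metis
  have rotate_rotate_n: "rotate k (rotate l xs) = xs" if "xs \<in> ?C" "k + l = n" for xs k l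
    using that length_cyclic_zigzag_arrangement[OF that(1)] by (simp add: rotate_rotate rotate_id)
  have mods: "(Suc p + (n - 1)) mod n = p" "(n - Suc p + p) mod n = n - 1"
    using assms(3) by (simp_all add: mod_if)
  have evens: "even (Suc p)" "even (n - Suc p)"
    using assms by simp_all
  have "bij_betw (rotate (Suc p)) {xs \<in> ?C. xs ! p = n} {xs \<in> ?C. xs ! (n - 1) = n}"
  proof (rule bij_betw_byWitness[where f' = "rotate (n - Suc p)"])
    show "\<forall>xs\<in>{xs \<in> ?C. xs ! p = n}. rotate (n - Suc p) (rotate (Suc p) xs) = xs"
      "\<forall>xs\<in>{xs \<in> ?C. xs ! (n - 1) = n}. rotate (Suc p) (rotate (n - Suc p) xs) = xs"
      using assms(3) by (auto intro!: rotate_rotate_n simp del: rotate_Suc)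
    show "rotate (Suc p) ` {xs \<in> ?C. xs ! p = n} \<subseteq> {xs \<in> ?C. xs ! (n - 1) = n}"
      using assms(3) evens(1) rotate_in nth_rotate'[of _ "n - 1" "Suc p"] mods(1)
      by (auto simp del: rotate_Suc)
    show "rotate (n - Suc p) ` {xs \<in> ?C. xs ! (n - 1) = n} \<subseteq> {xs \<in> ?C. xs ! p = n}"
      using assms(3) evens(2) rotate_in nth_rotate'[of _ p "n - Suc p"] mods(2)
      by (auto simp del: rotate_Suc)
  qed
  then show ?thesis
    by (rule bij_betw_same_card)
qed

lemma cyclic_zigzag_snoc_greatest_iff:
  assumes "odd (length ys)" "\<forall>y\<in>set ys. y < M"
  shows "cyclic_zigzag (ys @ [M]) \<longleftrightarrow> zigzag ys"
proof -
  have "ys \<noteq> []"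
    using assms(1) by auto
  have "zigzag (ys @ [M]) \<longleftrightarrow> zigzag ys"
  proof
    assume "zigzag (ys @ [M])"
    from zigzag_take[OF this, of "length ys"] show "zigzag ys"
      by simp
  next
    have "zigzag []"
      by (simp add: zigzag_def)
    moreover assume "zigzag ys"
    ultimately show "zigzag (ys @ [M])"
      using zigzag_append_greatest[of ys M "[]"] assms by simp
  qed
  moreover have "ys ! 0 < M"
    using \<open>ys \<noteq> []\<close> assms(2) by simp
  ultimately show ?thesis
    using assms(1) \<open>ys \<noteq> []\<close> by (simp add: cyclic_zigzag_iff nth_append)
qed

lemma cyclic_zigzag_arrangements_greatest_last:
  assumes "even n" "n \<noteq> 0"
  shows "{xs \<in> cyclic_zigzag_arrangements {1..n}. xs ! (n - 1) = n} =
         (\<lambda>ys. ys @ [n]) ` zigzag_arrangements {1..<n}"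
proof -
  have ivl: "{1..n} = insert n {1..<n}" "n \<notin> {1..<n}"
    using assms(2) by auto
  have snoc: "ys @ [n] \<in> cyclic_zigzag_arrangements {1..n} \<longleftrightarrow> ys \<in> zigzag_arrangements {1..<n}"
    for ys
  proof -
    have "distinct (ys @ [n]) \<and> set (ys @ [n]) = {1..n} \<longleftrightarrow> distinct ys \<and> set ys = {1..<n}"
      unfolding ivl(1) using ivl(2) by (auto simp: insert_ident)
    moreover have "cyclic_zigzag (ys @ [n]) \<longleftrightarrow> zigzag ys" if "distinct ys" "set ys = {1..<n}"
    proof (rule cyclic_zigzag_snoc_greatest_iff)
      have "length ys = n - 1"
        using that distinct_card[of ys] by simp
      then show "odd (length ys)"
        using assms by presburger
      show "\<forall>y\<in>set ys. y < n"
        using that by simp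
    qed
    ultimately show ?thesis
      unfolding cyclic_zigzag_arrangements_def zigzag_arrangements_def by blast
  qed
  show ?thesis
  proof (intro equalityI subsetI)
    fix xs
    assume xs: "xs \<in> {xs \<in> cyclic_zigzag_arrangements {1..n}. xs ! (n - 1) = n}"
    then have "xs = butlast xs @ [n]"
      using length_cyclic_zigzag_arrangement[of xs n] assms(2)
      by (metis (mono_tags) append_butlast_last_id last_conv_nth list.size(3) mem_Collect_eq)
    with xs snoc show "xs \<in> (\<lambda>ys. ys @ [n]) ` zigzag_arrangements {1..<n}"
      by (metis (no_types, lifting) mem_Collect_eq rev_image_eqI)
  next
    fix xs
    assume "xs \<in> (\<lambda>ys. ys @ [n]) ` zigzag_arrangements {1..<n}"
    then obtain ys where ys: "ys \<in> zigzag_arrangements {1..<n}" and xs: "xs = ys @ [n]"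
      by blast
    then have "length ys = n - 1"
      using distinct_card[of ys] by (auto simp: zigzag_arrangements_def)
    with ys snoc show "xs \<in> {xs \<in> cyclic_zigzag_arrangements {1..n}. xs ! (n - 1) = n}"
      by (simp add: xs nth_append)
  qed
qed

lemma card_odd_less: "card {p. p < n \<and> odd p} = n div 2"
proof -
  have "{p. p < n \<and> odd p} = (\<lambda>j. 2 * j + 1) ` {..<n div 2}"
    by (auto simp: image_iff elim!: oddE)
  then show ?thesis
    by (simp add: card_image inj_on_def)
qed

lemma card_cyclic_zigzag_arrangements:
  assumes "even n" "n \<noteq> 0"
  shows "2 * card (cyclic_zigzag_arrangements {1..n}) = n * euler_zigzag (n - 1)"
proof -
  let ?C = "cyclic_zigzag_arrangements {1..n}" and ?P = "{p. p < n \<and> odd p}"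
  let ?at = "\<lambda>p. {xs \<in> ?C. xs ! p = n}"
  have "finite ?C"
    by (rule finite_subset[OF _ finite_subset_distinct[of "{1..n}"]])
       (auto simp: cyclic_zigzag_arrangements_def)
  have "(\<Union>p\<in>?P. ?at p) = ?C"
    using cyclic_zigzag_arrangement_greatest_odd[OF assms] by blast
  moreover have "card (\<Union>p\<in>?P. ?at p) = (\<Sum>p\<in>?P. card (?at p))"
  proof (intro card_UN_disjoint ballI impI)
    fix p q
    assume "p \<in> ?P" "q \<in> ?P" "p \<noteq> q"
    then show "?at p \<inter> ?at q = {}"
      using length_cyclic_zigzag_arrangement
      by (auto simp: cyclic_zigzag_arrangements_def nth_eq_iff_index_eq)
  qed (use \<open>finite ?C\<close> in auto)
  ultimately have "card ?C = (\<Sum>p\<in>?P. card (?at p))"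
    by simp
  also have "\<dots> = (\<Sum>p\<in>?P. card (?at (n - 1)))"
    using assms(1) by (intro sum.cong refl card_cyclic_zigzag_arrangements_greatest_at) auto
  also have "card (?at (n - 1)) = euler_zigzag (n - 1)"
  proof -
    have "inj (\<lambda>ys. ys @ [n])"
      by (rule injI) simp
    then show ?thesis
      using cyclic_zigzag_arrangements_greatest_last[OF assms]
      by (simp add: card_image inj_on_subset card_zigzag_arrangements)
  qed
  finally show ?thesis
    using assms(1) by (simp add: card_odd_less)
qed

section \<open>The series\<close>

lemma has_sum_int_inverse_power_4k_plus_1:
  fixes L :: real
  assumes "even n" "(\<lambda>j. 1 / (2 * real j + 1) ^ n) sums L"
  shows "((\<lambda>k::int. 1 / real_of_int (4 * k + 1) ^ n) has_sum L) UNIV"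
proof -
  \<comment> \<open>\<open>g\<close> enumerates the integers so that \<open>\<bar>4 g j + 1\<bar> = 2 j + 1\<close>\<close>
  define g :: "nat \<Rightarrow> int"
    where "g j = (if even j then int (j div 2) else - int (j div 2) - 1)" for j
  have "bij_betw g UNIV UNIV"
    by (rule bij_betw_byWitness
        [where f' = "\<lambda>k. if k \<ge> 0 then 2 * nat k else 2 * nat (- k - 1) + 1"])
       (auto simp: g_def)
  moreover have "1 / real_of_int (4 * g j + 1) ^ n = 1 / (2 * real j + 1) ^ n" for j
  proof (cases "even j")
    case True
    then show ?thesis by (auto simp: g_def elim!: evenE)
  next
    case False
    then have "real_of_int (4 * g j + 1) = - (2 * real j + 1)"
      by (auto simp: g_def elim!: oddE)
    then show ?thesis
      using power_minus_even[OF assms(1), of "2 * real j + 1"] by (simp only:)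
  qed
  moreover have "((\<lambda>j. 1 / (2 * real j + 1) ^ n) has_sum L) UNIV"
    using assms(2) by (rule sums_nonneg_imp_has_sum) simp
  ultimately show ?thesis
    using has_sum_reindex_bij_betw[of g UNIV UNIV "\<lambda>k. 1 / real_of_int (4 * k + 1) ^ n" L] by simp
qed

lemma infsum_inverse_power_4k_plus_1:
  assumes "even n" "n \<noteq> 0"
  shows "(\<Sum>\<^sub>\<infinity>k::int. 1 / real_of_int (4 * k + 1) ^ n) =
           Polygamma (n - 1) (1/2) / (fact (n - 1) * 2 ^ n)"
proof -
  have "(\<lambda>j. inverse ((1/2 + real j) ^ Suc (n - 1))) sums
          ((-1) ^ Suc (n - 1) * Polygamma (n - 1) (1/2) / fact (n - 1))"
    using assms by (intro Polygamma_LIMSEQ) auto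
  moreover have "inverse ((1/2 + real j) ^ n) = 2 ^ n * (1 / (2 * real j + 1) ^ n)" for j
    by (simp add: field_simps)
  ultimately have "(\<lambda>j. 2 ^ n * (1 / (2 * real j + 1) ^ n)) sums
                     (Polygamma (n - 1) (1/2) / fact (n - 1))"
    using assms by simp
  then have "(\<lambda>j. 2 ^ n * (1 / (2 * real j + 1) ^ n) / 2 ^ n) sums
               (Polygamma (n - 1) (1/2) / fact (n - 1) / 2 ^ n)"
    by (rule sums_divide)
  then have "(\<lambda>j. 1 / (2 * real j + 1) ^ n) sums (Polygamma (n - 1) (1/2) / (fact (n - 1) * 2 ^ n))"
    by simp
  then show ?thesis
    using assms(1) by (intro infsumI has_sum_int_inverse_power_4k_plus_1)
qed

lemma Polygamma_half_odd_euler_zigzag: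
  assumes "odd m"
  shows "2 * Polygamma m (1/2 :: real) = pi ^ Suc m * euler_zigzag m"
proof -
  have "Polygamma m (1/2 :: complex) = of_real (Polygamma m (1/2))"
    using Polygamma_of_real[of "1/2" m] by simp
  then have "complex_of_real (2 * Polygamma m (1/2)) = (1 - (-1) ^ m) * Polygamma m (1/2)"
    using assms by simp
  also have "\<dots> = complex_of_real (pi ^ Suc m * euler_zigzag m)"
    using Polygamma_half_tangent_number[of m] assms by (simp add: tangent_number_eq_euler_zigzag)
  finally show ?thesis
    by (simp only: of_real_eq_iff)
qed

theorem mainTheorem10:
  fixes n :: nat
  assumes "even n" and "n \<ge> 2"
  shows "real (A0 n) = (2 / pi) ^ n * fact n * (\<Sum>\<^sub>\<infinity>k::int. 1 / (real_of_int (4 * k + 1)) ^ n)"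
proof -
  obtain m where n: "n = Suc m"
    using assms(2) by (cases n) auto
  with assms(1) have "odd m" "n \<noteq> 0"
    by simp_all
  let ?\<psi> = "Polygamma m (1/2 :: real)"
  have "2 * A0 n = n * euler_zigzag m"
    using A0_eq_card_cyclic_zigzag_arrangements card_cyclic_zigzag_arrangements
      assms(1) \<open>n \<noteq> 0\<close> n by simp
  then have "real (A0 n) = real n * real (euler_zigzag m) / 2"
    by (simp add: field_simps flip: of_nat_mult)
  also have "\<dots> = real n * ?\<psi> / pi ^ n"
    using Polygamma_half_odd_euler_zigzag[OF \<open>odd m\<close>] n by (simp add: field_simps)
  also have "\<dots> = (2 / pi) ^ n * fact n * (?\<psi> / (fact m * 2 ^ n))"
    by (simp add: n power_divide field_simps)
  also have "?\<psi> / (fact m * 2 ^ n) = (\<Sum>\<^sub>\<infinity>k::int. 1 / real_of_int (4 * k + 1) ^ n)"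
    using infsum_inverse_power_4k_plus_1[OF assms(1) \<open>n \<noteq> 0\<close>] n by simp
  finally show ?thesis .
qed

end
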